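(* Let $a,b,c\in\mathbb{R}$ with $a+c=b$, and let $\rho=\max\{|a|,|b|,|c|\}$ satisfy $0<\rho<24/35$. Let $D_\rho=\det\begin{pmatrix}2+a&1+b\\1+b&2+c\end{pmatrix}$ and let $M_\rho=\min\{Q_\rho(s,t):(s,t)\in\mathbb{Z}^2\setminus\{(0,0)\}\}$, where $Q_\rho(s,t)=(2+a)s^2+2(1+b)st+(2+c)t^2$. Then $D_\rho^{-1/2}M_\rho<2\cdot 3^{-1/2}$. *)

theory Defs
  imports Complex_Main
begin

definition Qform :: "real \<Rightarrow> real \<Rightarrow> real \<Rightarrow> int \<Rightarrow> int \<Rightarrow> real" where
  "Qform a b c s t = (2 + a) * (real_of_int s)^2 + 2 * (1 + b) * real_of_int s * real_of_int t
                      + (2 + c) * (real_of_int t)^2"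

definition Dform :: "real \<Rightarrow> real \<Rightarrow> real \<Rightarrow> real" where
  "Dform a b c = (2 + a) * (2 + c) - (1 + b)^2"

text \<open>Minimum of the form over nonzero integer vectors (the infimum is attained,
  as the form is positive definite under the hypotheses).\<close>
definition Mform :: "real \<Rightarrow> real \<Rightarrow> real \<Rightarrow> real" where
  "Mform a b c = Inf {Qform a b c s t | s t. (s, t) \<noteq> (0, 0)}"

end

theory Submission
  imports Defs
begin

text \<open>With \<open>x, y, z = a, c, -b\<close> (so \<open>x + y + z = 0\<close>) the determinant is
  \<open>3 - (x\<^sup>2 + y\<^sup>2 + z\<^sup>2)/2\<close> and the vectors \<open>(1,0), (0,1), (1,-1)\<close> have
  \<open>Q\<close>-values \<open>2 + x, 2 + y, 2 + z\<close>, so the situation is symmetric in \<open>x, y, z\<close>.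
  The minimum \<open>M\<close> is at most \<open>2 + x\<close> for the smallest of the three, say \<open>x\<close>; then
  \<open>x < 0\<close> and \<open>(y - x)(z - x) \<ge> 0\<close> give \<open>4D \<ge> 12 - 12x\<^sup>2 > 3(2 + x)\<^sup>2\<close> as soon as
  \<open>-4/5 < x\<close>; the hypothesis \<open>\<rho> < 24/35\<close> is only used in this weaker form.\<close>

lemma Qform_completed_square:
  "(2 + a) * Qform a b c s t = ((2 + a) * s + (1 + b) * t)\<^sup>2 + Dform a b c * t\<^sup>2"
  unfolding Qform_def Dform_def by (simp add: algebra_simps power2_eq_square)

lemma Qform_nonneg:
  assumes "0 < 2 + a" "0 \<le> Dform a b c"
  shows "0 \<le> Qform a b c s t"
proof -
  have "0 \<le> (2 + a) * Qform a b c s t"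
    unfolding Qform_completed_square using assms(2) by simp
  then show ?thesis
    using assms(1) by (simp add: zero_le_mult_iff)
qed

lemma Mform_le_Qform:
  assumes "0 < 2 + a" "0 \<le> Dform a b c" "(s, t) \<noteq> (0, 0)"
  shows "Mform a b c \<le> Qform a b c s t"
  unfolding Mform_def
proof (rule cInf_lower)
  show "Qform a b c s t \<in> {Qform a b c s t | s t. (s, t) \<noteq> (0, 0)}"
    using assms(3) by blast
  show "bdd_below {Qform a b c s t | s t. (s, t) \<noteq> (0, 0)}"
    using Qform_nonneg[OF assms(1,2)] by (intro bdd_belowI[of _ 0]) auto
qed

lemma Dform_sum_eq:
  assumes "a + c = b"
  shows "Dform a b c = 3 - (a\<^sup>2 + b\<^sup>2 + c\<^sup>2) / 2"
  unfolding Dform_def assms[symmetric] by (simp add: field_simps power2_eq_square)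

lemma Dform_pos:
  assumes "a + c = b" "\<bar>a\<bar> < 1" "\<bar>b\<bar> < 1" "\<bar>c\<bar> < 1"
  shows "0 < Dform a b c"
proof -
  have "a\<^sup>2 < 1" "b\<^sup>2 < 1" "c\<^sup>2 < 1"
    using assms(2-4) by (simp_all add: abs_square_less_1)
  then show ?thesis
    unfolding Dform_sum_eq[OF assms(1)] by (simp add: field_simps)
qed

lemma sum_zero_min_bound:
  fixes x y z :: real
  assumes "x + y + z = 0" "x \<le> y" "x \<le> z" "x \<noteq> 0" "-4/5 < x"
  shows "3 * (2 + x)\<^sup>2 < 12 - 2 * (x\<^sup>2 + y\<^sup>2 + z\<^sup>2)"
proof -
  have "x < 0"
    using assms(1-4) by linarith
  have z: "z = - x - y"
    using assms(1) by linarith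
  have "x\<^sup>2 + y\<^sup>2 + z\<^sup>2 = 6 * x\<^sup>2 - 2 * ((y - x) * (z - x))"
    unfolding z by (simp add: algebra_simps power2_eq_square)
  moreover have "0 \<le> (y - x) * (z - x)"
    using assms(2,3) by simp
  moreover have "x * (15 * x + 12) < 0"
    using \<open>x < 0\<close> assms(5) by (intro mult_neg_pos) auto
  ultimately show ?thesis
    by (simp add: algebra_simps power2_eq_square)
qed

lemma min_diagonal_bound:
  assumes "a + c = b" "a \<noteq> 0 \<or> c \<noteq> 0"
    and "\<bar>a\<bar> < 4/5" "\<bar>b\<bar> < 4/5" "\<bar>c\<bar> < 4/5"
  shows "3 * (min (2 + a) (min (2 + c) (2 - b)))\<^sup>2 < 4 * Dform a b c"
proof -
  have D: "4 * Dform a b c = 12 - 2 * (a\<^sup>2 + c\<^sup>2 + (-b)\<^sup>2)"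
    unfolding Dform_sum_eq[OF assms(1)] by (simp add: field_simps)
  consider "a \<le> c" "a \<le> -b" | "c \<le> a" "c \<le> -b" | "-b \<le> a" "-b \<le> c"
    by linarith
  then show ?thesis
  proof cases
    case 1
    then have "3 * (2 + a)\<^sup>2 < 12 - 2 * (a\<^sup>2 + c\<^sup>2 + (-b)\<^sup>2)"
      using assms by (intro sum_zero_min_bound) auto
    moreover have "min (2 + a) (min (2 + c) (2 - b)) = 2 + a"
      using 1 by (simp add: min_def)
    ultimately show ?thesis
      unfolding D by simp
  next
    case 2
    then have "3 * (2 + c)\<^sup>2 < 12 - 2 * (c\<^sup>2 + a\<^sup>2 + (-b)\<^sup>2)"
      using assms by (intro sum_zero_min_bound) auto
    moreover have "min (2 + a) (min (2 + c) (2 - b)) = 2 + c"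
      using 2 by (simp add: min_def)
    ultimately show ?thesis
      unfolding D by (simp add: ac_simps)
  next
    case 3
    then have "3 * (2 + -b)\<^sup>2 < 12 - 2 * ((-b)\<^sup>2 + a\<^sup>2 + c\<^sup>2)"
      using assms by (intro sum_zero_min_bound) auto
    moreover have "min (2 + a) (min (2 + c) (2 - b)) = 2 + -b"
      using 3 by (simp add: min_def)
    ultimately show ?thesis
      unfolding D by (simp add: ac_simps)
  qed
qed

lemma powr_neg_half_bound:
  fixes d m :: real
  assumes "0 < d" "0 \<le> m" "3 * m\<^sup>2 < 4 * d"
  shows "d powr (-1/2) * m < 2 * 3 powr (-1/2)"
proof -
  have "(sqrt 3 * m)\<^sup>2 < (2 * sqrt d)\<^sup>2"
    using assms by (simp add: power_mult_distrib)
  then have "sqrt 3 * m < 2 * sqrt d"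
    by (rule power_less_imp_less_base) (simp add: less_imp_le[OF assms(1)])
  then show ?thesis
    using assms(1) by (simp add: powr_minus_divide powr_half_sqrt field_simps)
qed

theorem mainTheorem10:
  fixes a b c :: real
  assumes "a + c = b"
    and "0 < Max {\<bar>a\<bar>, \<bar>b\<bar>, \<bar>c\<bar>}"
    and "Max {\<bar>a\<bar>, \<bar>b\<bar>, \<bar>c\<bar>} < 24 / 35"
  shows "Dform a b c powr (-1/2) * Mform a b c < 2 * 3 powr (-1/2)"
proof -
  have small: "\<bar>a\<bar> < 24/35" "\<bar>b\<bar> < 24/35" "\<bar>c\<bar> < 24/35"
    using assms(3) by auto
  have nonzero: "a \<noteq> 0 \<or> c \<noteq> 0"
    using assms(1,2) by auto
  have D: "0 < Dform a b c"
    using small by (intro Dform_pos[OF assms(1)]) auto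
  have "0 < 2 + a"
    using small by auto
  note Mform_le = Mform_le_Qform[OF this less_imp_le[OF D]]
  define m where "m = min (2 + a) (min (2 + c) (2 - b))"
  have "Mform a b c \<le> m"
    using Mform_le[of 1 0] Mform_le[of 0 1] Mform_le[of 1 "-1"] assms(1)
    by (simp add: m_def Qform_def algebra_simps)
  then have "Dform a b c powr (-1/2) * Mform a b c \<le> Dform a b c powr (-1/2) * m"
    by (rule mult_left_mono) simp
  also have "\<dots> < 2 * 3 powr (-1/2)"
  proof (rule powr_neg_half_bound[OF D])
    show "0 \<le> m"
      using small unfolding m_def abs_less_iff by simp
    show "3 * m\<^sup>2 < 4 * Dform a b c"
      unfolding m_def using small by (intro min_diagonal_bound[OF assms(1) nonzero]) auto
  qed
  finally show ?thesis .
qed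

end
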